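(* Let $c,d\in\mathbb{R}^n$ be distinct nonzero vectors with $c^Td\le0$. Then $\gamma[c,d]\le\tfrac12$. If in addition $0\notin[c,d]$, then $\gamma[c,d]>0$.
   Context: For distinct vectors $c,d\in\mathbb{R}^n$, $\gamma[c,d]=\frac{\sqrt{\|c\|^2\|d\|^2-(c^Td)^2}}{\|c-d\|^2}$, and $[c,d]$ denotes the closed line segment between $c$ and $d$. *)

theory Defs
  imports "HOL-Analysis.Analysis"
begin

definition gamma :: "real ^ 'n \<Rightarrow> real ^ 'n \<Rightarrow> real" where
  "gamma c d = sqrt ((norm c)^2 * (norm d)^2 - (c \<bullet> d)^2) / (norm (c - d))^2"

end

theory Submission
  imports Defs
begin

text \<open>Write \<open>a = \<parallel>c\<parallel>\<close>, \<open>b = \<parallel>d\<parallel>\<close> and \<open>p = c \<bullet> d \<le> 0\<close>. Then \<open>\<parallel>c - d\<parallel>\<^sup>2 = a\<^sup>2 + b\<^sup>2 - 2p \<ge> a\<^sup>2 + b\<^sup>2 \<ge> 2ab\<close>,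
  while the numerator of \<open>\<gamma>\<close> is at most \<open>ab\<close>, which gives \<open>\<gamma> \<le> 1/2\<close>. The numerator vanishes only
  in the equality case \<open>p = -ab\<close> of Cauchy-Schwarz, and this is exactly the case
  \<open>\<parallel>c - d\<parallel> = a + b\<close>, i.e. the case where \<open>0\<close> lies on the segment.\<close>

lemma sqrt_gram_le_half_norm_diff_power2:
  fixes c d :: "'a::real_inner"
  assumes "c \<bullet> d \<le> 0"
  shows "sqrt ((norm c)\<^sup>2 * (norm d)\<^sup>2 - (c \<bullet> d)\<^sup>2) \<le> (norm (c - d))\<^sup>2 / 2"
proof -
  have "sqrt ((norm c)\<^sup>2 * (norm d)\<^sup>2 - (c \<bullet> d)\<^sup>2) \<le> sqrt ((norm c * norm d)\<^sup>2)"
    by (simp add: power_mult_distrib)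
  also have "\<dots> = norm c * norm d"
    by simp
  also have "\<dots> \<le> ((norm c)\<^sup>2 + (norm d)\<^sup>2) / 2"
    using sum_squares_bound[of "norm c" "norm d"] by simp
  also have "\<dots> \<le> (norm (c - d))\<^sup>2 / 2"
    using assms dot_norm_neg[of c d] by simp
  finally show ?thesis .
qed

lemma zero_in_closed_segment_iff_inner:
  fixes c d :: "'a::euclidean_space"
  shows "0 \<in> closed_segment c d \<longleftrightarrow> c \<bullet> d = - (norm c * norm d)"
proof -
  have "0 \<in> closed_segment c d \<longleftrightarrow> norm (c - d) = norm c + norm d"
    by (simp add: between_mem_segment[symmetric] between dist_norm)
  also have "\<dots> \<longleftrightarrow> (norm (c - d))\<^sup>2 = (norm c + norm d)\<^sup>2"
    by (simp add: power2_eq_iff_nonneg)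
  also have "\<dots> \<longleftrightarrow> c \<bullet> d = - (norm c * norm d)"
    using dot_norm_neg[of c d] by (auto simp: power2_sum)
  finally show ?thesis .
qed

lemma inner_power2_less_if_zero_notin_closed_segment:
  fixes c d :: "'a::euclidean_space"
  assumes "c \<bullet> d \<le> 0" and "0 \<notin> closed_segment c d"
  shows "(c \<bullet> d)\<^sup>2 < (norm c)\<^sup>2 * (norm d)\<^sup>2"
proof -
  have "c \<bullet> d \<noteq> - (norm c * norm d)"
    using assms(2) zero_in_closed_segment_iff_inner by blast
  then have "\<bar>c \<bullet> d\<bar> < norm c * norm d"
    using assms(1) Cauchy_Schwarz_ineq2[of c d] by linarith
  then have "\<bar>c \<bullet> d\<bar>\<^sup>2 < (norm c * norm d)\<^sup>2"
    by (rule power_strict_mono) auto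
  then show ?thesis
    by (simp add: power_mult_distrib)
qed

lemma gamma_le_half:
  fixes c d :: "real ^ 'n"
  assumes "c \<noteq> d" and "c \<bullet> d \<le> 0"
  shows "gamma c d \<le> 1/2"
  using sqrt_gram_le_half_norm_diff_power2[OF assms(2)] assms(1)
  by (simp add: gamma_def divide_simps)

lemma gamma_pos:
  fixes c d :: "real ^ 'n"
  assumes "c \<noteq> d" and "c \<bullet> d \<le> 0" and "0 \<notin> closed_segment c d"
  shows "gamma c d > 0"
  using inner_power2_less_if_zero_notin_closed_segment[OF assms(2,3)] assms(1)
  by (simp add: gamma_def)

theorem mainTheorem8:
  fixes c d :: "real ^ 'n"
  assumes "c \<noteq> d" and "c \<noteq> 0" and "d \<noteq> 0" and "c \<bullet> d \<le> 0"
  shows "gamma c d \<le> 1/2 \<and> (0 \<notin> closed_segment c d \<longrightarrow> gamma c d > 0)"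
  using gamma_le_half[OF assms(1,4)] gamma_pos[OF assms(1,4)] by blast

end
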